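(* Let $\mathcal{A}\subset\mathbb{Z}$ be a finite alphabet, let $G=(V,E)$ be a finite directed graph with edge labelling $\ell:E\to\mathcal{A}$ with $M=\sum_{a\in\mathcal{A}}M_a$ primitive, let $\beta$ be a Pisot number of degree $r$, and let $\nu$, $\mu$, $\Phi$ be as in the context. Let $z=m_0+m_1\beta+\cdots+m_{r-1}\beta^{r-1}\in\mathbb{Z}[\beta]$ with $m_0,\ldots,m_{r-1}\in\mathbb{Z}$. Then the limit $\lim_{k\to\infty}\widehat{\nu}(z\beta^k)$ exists, and it equals the Fourier coefficient $$\widehat{\psi}(m_0,\ldots,m_{r-1})=\int_{\mathbb{T}^r}e^{-2\pi i(m_0t_0+\cdots+m_{r-1}t_{r-1})}\,d\psi(t_0,\ldots,t_{r-1})$$ of the measure $\psi=\Phi_*(\mu)$ on $\mathbb{T}^r$.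
   Context: For $a\in\mathcal{A}$, $M_a$ is the $V\times V$ matrix with $(M_a)_{ij}=1$ if $(i,j)\in E$ and $\ell((i,j))=a$, and $0$ otherwise. By Perron–Frobenius, $M$ has a dominant eigenvalue $\lambda>0$ with positive left eigenvector $\mathbf v_L$ and right eigenvector $\mathbf v_R$, normalised by $\mathbf v_L^{\mathsf T}\mathbf v_R=1$. A path is a sequence of edges with the terminal vertex of each edge equal to the initial vertex of the next. $\mathcal{K}^+\subseteq\mathcal{A}^{\mathbb{N}}$ is the set of sequences $(\ell(e_k))_{k\ge1}$ for infinite paths in $G$, and $\mu^+$ the Borel probability measure on it with $\mu^+(\{x:x_1=\varepsilon_1,\ldots,x_k=\varepsilon_k\})=\lambda^{-k}\mathbf v_L^{\mathsf T}M_{\varepsilon_1}\cdots M_{\varepsilon_k}\mathbf v_R$. $\mathcal{K}\subseteq\mathcal{A}^{\mathbb{Z}}$ is the set of sequences $(\ell(e_k))_{k\in\mathbb{Z}}$ for bi-infinite paths $(e_k)_{k\in\mathbb{Z}}$ in $G$, and $\mu$ the Borel probability measure on $\mathcal{K}$ with $\mu(\{x: x_{m+1}=\varepsilon_1,\ldots,x_{m+k}=\varepsilon_k\})=\lambda^{-k}\mathbf v_L^{\mathsf T}M_{\varepsilon_1}\cdots M_{\varepsilon_k}\mathbf v_R$ for all $m\in\mathbb{Z}$. A Pisot number is an algebraic integer $>1$ all of whose other Galois conjugates have modulus $<1$ (integers $\ge2$ included). $\phi^+((x_k)_{k\ge1})=\sum_{k\ge1}x_k\beta^{-k}$, $\nu=(\phi^+)_*(\mu^+)$,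 and $\widehat{\nu}(t)=\int e^{-2\pi i x t}\,d\nu(x)$. With $\mathbb{T}=\mathbb{R}/\mathbb{Z}$, $\Phi:\mathcal{K}\to\mathbb{T}^r$ is $\Phi((x_k)_{k\in\mathbb{Z}})=\big(\sum_{k\in\mathbb{Z}}x_k\beta^{-k+m}\bmod 1\big)_{m=0}^{r-1}$, where the part of the series with $k\le0$ converges modulo $1$ because $\beta$ is Pisot (it is understood as $\lim_{n\to\infty}\sum_{k=-n}^\infty x_k\beta^{-k+m}\bmod 1$). *)

theory Defs
  imports "HOL-Probability.Probability" "HOL-Computational_Algebra.Computational_Algebra"
begin

definition label_matrix :: "('v::finite \<times> 'v) set \<Rightarrow> ('v \<times> 'v \<Rightarrow> int) \<Rightarrow> int \<Rightarrow> real^'v^'v" where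
  "label_matrix E lab a = (\<chi> i j. if (i, j) \<in> E \<and> lab (i, j) = a then 1 else 0)"

definition total_matrix :: "int set \<Rightarrow> ('v::finite \<times> 'v) set \<Rightarrow> ('v \<times> 'v \<Rightarrow> int) \<Rightarrow> real^'v^'v" where
  "total_matrix Alph E lab = (\<Sum>a\<in>Alph. label_matrix E lab a)"

definition matpow :: "real^'v::finite^'v \<Rightarrow> nat \<Rightarrow> real^'v^'v" where
  "matpow A k = ((\<lambda>B. A ** B) ^^ k) (mat 1)"

definition primitive_matrix :: "real^'v::finite^'v \<Rightarrow> bool" where
  "primitive_matrix A \<longleftrightarrow> (\<forall>i j. A $ i $ j \<ge> 0) \<and> (\<exists>k>0. \<forall>i j. matpow A k $ i $ j > 0)"

definition word_matrix :: "('v::finite \<times> 'v) set \<Rightarrow> ('v \<times> 'v \<Rightarrow> int) \<Rightarrow> int list \<Rightarrow> real^'v^'v" where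
  "word_matrix E lab ws = foldr (\<lambda>a B. label_matrix E lab a ** B) ws (mat 1)"

definition pisot_of_degree :: "real \<Rightarrow> nat \<Rightarrow> bool" where
  "pisot_of_degree \<beta> r \<longleftrightarrow> \<beta> > 1 \<and>
     (\<exists>p :: int poly. lead_coeff p = 1 \<and> irreducible p \<and> degree p = r \<and>
        poly (map_poly of_int p) \<beta> = 0 \<and>
        (\<forall>z :: complex. poly (map_poly of_int p) z = 0 \<and> z \<noteq> complex_of_real \<beta> \<longrightarrow> cmod z < 1))"

text \<open>One-sided sequences \<open>(x_k)_{k\<ge>1}\<close> are encoded as \<open>x :: nat \<Rightarrow> int\<close> with
  \<open>x i = x_{i+1}\<close>.\<close>

definition seq_space_plus :: "(nat \<Rightarrow> int) measure" where
  "seq_space_plus = PiM UNIV (\<lambda>_. count_space UNIV)"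

definition seq_space :: "(int \<Rightarrow> int) measure" where
  "seq_space = PiM UNIV (\<lambda>_. count_space UNIV)"

definition is_mu_plus ::
  "int set \<Rightarrow> ('v::finite \<times> 'v) set \<Rightarrow> ('v \<times> 'v \<Rightarrow> int) \<Rightarrow> real \<Rightarrow> real^'v \<Rightarrow> real^'v
     \<Rightarrow> (nat \<Rightarrow> int) measure \<Rightarrow> bool" where
  "is_mu_plus Alph E lab lam vL vR m \<longleftrightarrow> prob_space m \<and> sets m = sets seq_space_plus \<and>
     (\<forall>ws. set ws \<subseteq> Alph \<longrightarrow>
        measure m {x \<in> space m. \<forall>i<length ws. x i = ws ! i}
          = (1 / lam) ^ length ws * (vL \<bullet> (word_matrix E lab ws *v vR)))"

definition is_mu ::
  "int set \<Rightarrow> ('v::finite \<times> 'v) set \<Rightarrow> ('v \<times> 'v \<Rightarrow> int) \<Rightarrow> real \<Rightarrow> real^'v \<Rightarrow> real^'v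
     \<Rightarrow> (int \<Rightarrow> int) measure \<Rightarrow> bool" where
  "is_mu Alph E lab lam vL vR m \<longleftrightarrow> prob_space m \<and> sets m = sets seq_space \<and>
     (\<forall>(n::int) ws. set ws \<subseteq> Alph \<longrightarrow>
        measure m {x \<in> space m. \<forall>i<length ws. x (n + 1 + int i) = ws ! i}
          = (1 / lam) ^ length ws * (vL \<bullet> (word_matrix E lab ws *v vR)))"

definition phi_plus :: "real \<Rightarrow> (nat \<Rightarrow> int) \<Rightarrow> real" where
  "phi_plus \<beta> x = (\<Sum>i. of_int (x i) * \<beta> powi (- int (Suc i)))"

text \<open>The torus \<open>\<real>/\<int>\<close> is represented by the fundamental domain [0,1).
  A real sequence s converges modulo 1 to t iff \<open>e^{2\<pi>i s_n} \<rightarrow> e^{2\<pi>i t}\<close>.\<close>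
definition converges_mod1 :: "(nat \<Rightarrow> real) \<Rightarrow> real \<Rightarrow> bool" where
  "converges_mod1 s t \<longleftrightarrow> (\<lambda>n. cis (2 * pi * s n)) \<longlonglongrightarrow> cis (2 * pi * t)"

text \<open>\<open>\<Sum>_{k=-n}^{\<infinity>} x_k \<beta>^{-k+m}\<close> (the tail k \<ge> 1 converges as a real series).\<close>
definition partial_series :: "real \<Rightarrow> (int \<Rightarrow> int) \<Rightarrow> nat \<Rightarrow> nat \<Rightarrow> real" where
  "partial_series \<beta> x m n =
     (\<Sum>k\<in>{- int n..0}. of_int (x k) * \<beta> powi (int m - k))
     + (\<Sum>i. of_int (x (int (Suc i))) * \<beta> powi (int m - int (Suc i)))"

definition Phi_coord :: "real \<Rightarrow> (int \<Rightarrow> int) \<Rightarrow> nat \<Rightarrow> real" where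
  "Phi_coord \<beta> x m = (THE t. 0 \<le> t \<and> t < 1 \<and> converges_mod1 (partial_series \<beta> x m) t)"

definition Phi :: "real \<Rightarrow> nat \<Rightarrow> (int \<Rightarrow> int) \<Rightarrow> (nat \<Rightarrow> real)" where
  "Phi \<beta> r x = (\<lambda>m\<in>{..<r}. Phi_coord \<beta> x m)"

definition torus :: "nat \<Rightarrow> (nat \<Rightarrow> real) measure" where
  "torus r = PiM {..<r} (\<lambda>_. restrict_space lborel {0..<1})"

definition fourier_transform :: "real measure \<Rightarrow> real \<Rightarrow> complex" where
  "fourier_transform \<nu> t = (\<integral>x. cis (- 2 * pi * x * t) \<partial>\<nu>)"

definition torus_fourier_coeff :: "nat \<Rightarrow> (nat \<Rightarrow> real) measure \<Rightarrow> (nat \<Rightarrow> int) \<Rightarrow> complex" where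
  "torus_fourier_coeff r \<psi> m = (\<integral>t. cis (- 2 * pi * (\<Sum>j<r. of_int (m j) * t j)) \<partial>\<psi>)"

end

(*
  The roots of the minimal polynomial of the Pisot number beta have integer power sums, and all
  roots other than beta lie in the open unit disc, so beta^j = T_j + O(rho^j) with integers T_j
  and rho < 1.  Hence for a bi-infinite sequence y with digits in a finite alphabet the partial
  series  sum_{k >= -n} y_k beta^(m-k), i.e. beta^(m+n+1) times phi+ of y shifted by n places,
  converge modulo 1, namely to the coordinates of Phi(y).  Since mu is shift-invariant and its
  one-sided marginal is mu+, the Fourier coefficient of nu at z beta^(n+1) is the mu-integral of
  exp(-2 pi i sum_l m_l (partial series)_l), and dominated convergence gives the limit
  integral of exp(-2 pi i <m, Phi(y)>) d mu(y), the Fourier coefficient of Phi_* mu.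
*)
theory Submission
  imports Defs "Berlekamp_Zassenhaus.Factorize_Int_Poly" "HOL-Complex_Analysis.Cauchy_Integral_Theorem"
begin

hide_const (open) module.smult
no_notation Matrix.scalar_prod (infix "\<bullet>" 70)
no_notation Matrix.vec_index (infixl "$" 100)

lemma rsquarefree_complex_of_irreducible_int_poly:
  fixes p :: "int poly"
  assumes "irreducible p"
  shows "rsquarefree (map_poly of_int p :: complex poly)"
proof -
  interpret of_rat: field_hom_0' "of_rat :: rat \<Rightarrow> complex" by unfold_locales
  have "square_free (map_poly of_rat (map_poly rat_of_int p) :: complex poly)"
    using square_free_int_rat[OF irreducible_imp_square_free[OF assms]]
    by (simp only: of_rat.square_free_map_poly)
  then show ?thesis
    by (simp add: map_poly_map_poly o_def square_free_rsquarefree)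
qed

fun geom_poly :: "'a::comm_ring_1 \<Rightarrow> nat \<Rightarrow> 'a poly" where
  "geom_poly z 0 = 1"
| "geom_poly z (Suc n) = pCons (z ^ Suc n) (geom_poly z n)"

lemma coeff_geom_poly: "coeff (geom_poly z n) i = (if i \<le> n then z ^ (n - i) else 0)"
proof (induction n arbitrary: i)
  case 0 thus ?case by (cases i) auto
next
  case (Suc n) thus ?case by (cases i) (auto simp: Suc_diff_le)
qed

lemma linear_times_geom_poly: "[:-z, 1:] * geom_poly z n = monom 1 (Suc n) - [:z ^ Suc n:]"
proof (induction n)
  case 0 thus ?case by (simp add: monom_Suc monom_0)
next
  case (Suc n)
  have "[:-z, 1:] * geom_poly z (Suc n) = smult (z ^ Suc n) [:-z, 1:] + pCons 0 ([:-z, 1:] * geom_poly z n)"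
    by (simp add: algebra_simps)
  also have "\<dots> = monom 1 (Suc (Suc n)) - [:z ^ Suc (Suc n):]"
    unfolding Suc by (simp add: poly_eq_iff coeff_pCons split: nat.split)
  finally show ?case .
qed

text \<open>Compare the coefficients of \<open>X^r\<close> in
  \<open>\<Sum>\<^sub>z P(X) (X^{N+1} - z^{N+1}) / (X - z) = X^{N+1} P'(X) - \<Sum>\<^sub>z z^{N+1} P(X) / (X - z)\<close>.\<close>
lemma newton_identity:
  fixes Z :: "'a::idom set"
  assumes "finite Z"
  defines "P \<equiv> \<Prod>z\<in>Z. [:-z, 1:]" and "r \<equiv> card Z"
  shows "(\<Sum>i\<le>r. coeff P i * (if r - i \<le> N then (\<Sum>z\<in>Z. z ^ (N - (r - i))) else 0))
       = (if N < r then of_nat (r - N) * coeff P (r - N) else 0)"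
proof -
  define Q where "Q z = (\<Prod>w\<in>Z - {z}. [:-w, 1:])" for z
  have P_eq: "P = [:-z, 1:] * Q z" if "z \<in> Z" for z
    unfolding P_def Q_def using prod.remove[OF assms(1) that, of "\<lambda>z. [:-z, 1:]"] by simp
  have coeff_Q: "coeff (Q z) r = 0" if "z \<in> Z" for z
  proof -
    have "degree (Q z) = card (Z - {z})"
      unfolding Q_def by (subst degree_prod_sum_eq) auto
    also have "\<dots> < r"
      using assms(1) that card_gt_0_iff[of Z] by (auto simp: r_def)
    finally show ?thesis by (rule coeff_eq_0)
  qed
  have P_geom: "P * geom_poly z N = monom 1 (Suc N) * Q z - smult (z ^ Suc N) (Q z)" if "z \<in> Z" for z
    unfolding P_eq[OF that] mult.commute[of "[:-z, 1:]"] mult.assoc linear_times_geom_poly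
    by (simp add: algebra_simps)
  have "pderiv P = (\<Sum>z\<in>Z. Q z)"
    unfolding P_def Q_def pderiv_prod by (simp add: pderiv_pCons)
  then have "coeff (\<Sum>z\<in>Z. P * geom_poly z N) r = coeff (monom 1 (Suc N) * pderiv P) r"
    using coeff_Q P_geom by (simp add: coeff_sum sum_subtractf sum_distrib_left cong: sum.cong)
  also have "\<dots> = (if N < r then of_nat (r - N) * coeff P (r - N) else 0)"
    by (auto simp: coeff_monom_mult coeff_pderiv Suc_diff_Suc)
  moreover have "coeff (\<Sum>z\<in>Z. P * geom_poly z N) r
      = (\<Sum>i\<le>r. coeff P i * (if r - i \<le> N then (\<Sum>z\<in>Z. z ^ (N - (r - i))) else 0))"
    unfolding coeff_sum coeff_mult
    by (subst sum.swap) (auto simp: coeff_geom_poly sum_distrib_left intro!: sum.cong)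
  ultimately show ?thesis by simp
qed

lemma power_sum_Ints:
  fixes Z :: "'a::idom set"
  assumes "finite Z" and coeffs_Ints: "\<And>i. coeff (\<Prod>z\<in>Z. [:-z, 1:]) i \<in> \<int>"
  shows "(\<Sum>z\<in>Z. z ^ N) \<in> \<int>"
proof (induction N rule: less_induct)
  case (less N)
  define P where "P = (\<Prod>z\<in>Z. [:-z, 1:])"
  define r where "r = card Z"
  define s where "s n = (\<Sum>z\<in>Z. z ^ n)" for n
  have "coeff P r = lead_coeff P"
    unfolding P_def r_def by (subst degree_prod_sum_eq) auto
  also have "\<dots> = 1"
    unfolding P_def lead_coeff_prod by simp
  finally have lead: "coeff P r = 1" .
  have "(\<Sum>i\<le>r. coeff P i * (if r - i \<le> N then s (N - (r - i)) else 0))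
      = (if N < r then of_nat (r - N) * coeff P (r - N) else 0)"
    using newton_identity[OF assms(1), of N] unfolding P_def r_def s_def .
  then have "s N = (if N < r then of_nat (r - N) * coeff P (r - N) else 0)
      - (\<Sum>i<r. coeff P i * (if r - i \<le> N then s (N - (r - i)) else 0))"
    using lead by (simp add: lessThan_Suc_atMost[symmetric] eq_diff_eq add.commute)
  also have "\<dots> \<in> \<int>"
    using less coeffs_Ints unfolding P_def s_def
    by (auto intro!: Ints_diff Ints_mult)
  finally show ?case unfolding s_def .
qed

lemma pisot_conjugates:
  assumes "pisot_of_degree \<beta> r"
  obtains Z :: "complex set" where "finite Z" "of_real \<beta> \<in> Z"
    "\<And>z. z \<in> Z - {of_real \<beta>} \<Longrightarrow> cmod z < 1" "\<And>j. (\<Sum>z\<in>Z. z ^ j) \<in> \<int>"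
proof -
  obtain p :: "int poly" where monic: "lead_coeff p = 1" and irr: "irreducible p"
    and root: "poly (map_poly of_int p) \<beta> = (0::real)"
    and small: "\<And>z::complex. poly (map_poly of_int p) z = 0 \<Longrightarrow> z \<noteq> of_real \<beta> \<Longrightarrow> cmod z < 1"
    using assms unfolding pisot_of_degree_def by blast
  define P :: "complex poly" where "P = map_poly of_int p"
  define Z where "Z = {z. poly P z = 0}"
  have "P \<noteq> 0" using monic by (auto simp: P_def)
  then have fin: "finite Z" unfolding Z_def by (rule poly_roots_finite)
  have "poly P (of_real \<beta>) = of_real (poly (map_poly of_int p) \<beta>)"
    by (simp add: P_def of_real_hom.poly_map_poly[symmetric] map_poly_map_poly o_def)
  then have \<beta>_Z: "of_real \<beta> \<in> Z" using root by (simp add: Z_def)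
  have small_Z: "cmod z < 1" if "z \<in> Z - {of_real \<beta>}" for z
    using small that by (simp add: Z_def P_def)
  have P_prod: "P = (\<Prod>z\<in>Z. [:-z, 1:])"
    using complex_poly_decompose_rsquarefree[OF rsquarefree_complex_of_irreducible_int_poly[OF irr]]
      monic by (simp add: P_def Z_def)
  have "coeff (\<Prod>z\<in>Z. [:-z, 1:]) i \<in> \<int>" for i
    unfolding P_prod[symmetric] by (simp add: P_def)
  then have "(\<Sum>z\<in>Z. z ^ j) \<in> \<int>" for j
    by (rule power_sum_Ints[OF fin])
  with fin \<beta>_Z small_Z show thesis by (rule that)
qed

lemma pisot_powers_near_integers:
  assumes "pisot_of_degree \<beta> r"
  obtains T :: "nat \<Rightarrow> int" and C \<rho> :: real
  where "0 \<le> \<rho>" "\<rho> < 1" "\<And>j. \<bar>\<beta> ^ j - of_int (T j)\<bar> \<le> C * \<rho> ^ j"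
proof -
  obtain Z :: "complex set" where fin: "finite Z" and \<beta>_Z: "of_real \<beta> \<in> Z"
    and small: "\<And>z. z \<in> Z - {of_real \<beta>} \<Longrightarrow> cmod z < 1" and "\<And>j. (\<Sum>z\<in>Z. z ^ j) \<in> \<int>"
    using pisot_conjugates[OF assms] by metis
  then have "\<forall>j. \<exists>t::int. (\<Sum>z\<in>Z. z ^ j) = of_int t"
    by (blast elim: Ints_cases)
  then obtain T :: "nat \<Rightarrow> int" where T: "\<And>j. (\<Sum>z\<in>Z. z ^ j) = of_int (T j)"
    by metis
  define \<rho> where "\<rho> = Max (insert 0 (cmod ` (Z - {of_real \<beta>})))"
  have \<rho>: "0 \<le> \<rho>" "\<rho> < 1" "\<And>z. z \<in> Z - {of_real \<beta>} \<Longrightarrow> cmod z \<le> \<rho>"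
    using fin small by (simp_all add: \<rho>_def)
  have "\<bar>\<beta> ^ j - of_int (T j)\<bar> \<le> real (card Z) * \<rho> ^ j" for j
  proof -
    have "(\<Sum>z\<in>Z. z ^ j) = of_real \<beta> ^ j + (\<Sum>z\<in>Z - {of_real \<beta>}. z ^ j)"
      by (rule sum.remove[OF fin \<beta>_Z])
    then have "of_real (\<beta> ^ j - of_int (T j)) = - (\<Sum>z\<in>Z - {of_real \<beta>}. z ^ j)"
      unfolding T by simp
    then have "\<bar>\<beta> ^ j - of_int (T j)\<bar> = cmod (\<Sum>z\<in>Z - {of_real \<beta>}. z ^ j)"
      by (metis norm_minus_cancel norm_of_real)
    also have "\<dots> \<le> (\<Sum>z\<in>Z - {of_real \<beta>}. \<rho> ^ j)"
      using \<rho> by (intro sum_norm_le) (simp add: norm_power power_mono)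
    also have "\<dots> \<le> real (card Z) * \<rho> ^ j"
      using \<rho> fin by (simp add: card_mono mult_right_mono)
    finally show ?thesis .
  qed
  with \<rho> show thesis by (intro that) auto
qed

lemma cis_2pi_add_of_int: "cis (2 * pi * (x + of_int k)) = cis (2 * pi * x)"
proof -
  have "cis (2 * pi * (x + of_int k)) = cis (2 * pi * x) * cis (2 * pi * of_int k)"
    by (simp add: cis_mult algebra_simps)
  then show ?thesis by simp
qed

lemma cis_2pi_frac: "cis (2 * pi * frac x) = cis (2 * pi * x)"
  using cis_2pi_add_of_int[of "frac x" "\<lfloor>x\<rfloor>"] by (simp add: frac_def)

lemma cis_2pi_inj_on_01:
  assumes "0 \<le> a" "a < 1" "0 \<le> b" "b < 1" and "cis (2 * pi * a) = cis (2 * pi * b)"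
  shows "a = b"
proof -
  have "cis (2 * pi * (a - b)) = 1"
    using assms(5) by (simp add: right_diff_distrib cis_divide[symmetric])
  then have "cos (2 * pi * (a - b)) = 1"
    by (metis cis.sel(1) one_complex.sel(1))
  then obtain n :: int where n: "a - b = of_int n"
    by (auto simp: cos_one_2pi_int)
  moreover have "\<bar>a - b\<bar> < 1" using assms by auto
  ultimately have "n = 0" by linarith
  with n show ?thesis by simp
qed

lemma converges_mod1_unique:
  assumes "converges_mod1 s a" "converges_mod1 s b" "0 \<le> a" "a < 1" "0 \<le> b" "b < 1"
  shows "a = b"
  using assms LIMSEQ_unique cis_2pi_inj_on_01 unfolding converges_mod1_def by metis

lemma the_converges_mod1:
  assumes "converges_mod1 s L"
  defines "t \<equiv> THE t. 0 \<le> t \<and> t < 1 \<and> converges_mod1 s t"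
  shows "0 \<le> t" "t < 1" "converges_mod1 s t"
proof -
  have frac_L: "0 \<le> frac L \<and> frac L < 1 \<and> converges_mod1 s (frac L)"
    using assms(1) by (simp add: converges_mod1_def cis_2pi_frac frac_lt_1)
  then have "t = frac L"
    unfolding t_def using converges_mod1_unique by (intro the_equality) blast+
  with frac_L show "0 \<le> t" "t < 1" "converges_mod1 s t" by simp_all
qed

lemma sum_atLeastAtMost_neg_int:
  "(\<Sum>k\<in>{- int n..0}. g k) = (\<Sum>j\<le>n. g (- int j))"
  by (rule sum.reindex_bij_witness[of _ "\<lambda>j. - int j" "\<lambda>k. nat (- k)"]) auto

text \<open>Writing \<open>\<beta>^j = T_j + d_j\<close> with integers \<open>T_j\<close> and \<open>\<bar>d_j\<bar> \<le> C \<rho>^j\<close>, the part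
  \<open>\<Sum>\<^sub>k\<^sub>\<le>\<^sub>0 x_k T_{m-k}\<close> of the series is an integer and the rest converges.\<close>
lemma partial_series_converges_mod1:
  assumes "pisot_of_degree \<beta> r" and bounded: "\<And>k. \<bar>x k\<bar> \<le> B"
  shows "\<exists>L. converges_mod1 (partial_series \<beta> x m) L"
proof -
  obtain T :: "nat \<Rightarrow> int" and C \<rho> where \<rho>: "0 \<le> \<rho>" "\<rho> < 1"
    and T: "\<And>j. \<bar>\<beta> ^ j - of_int (T j)\<bar> \<le> C * \<rho> ^ j"
    using pisot_powers_near_integers[OF assms(1)] by metis
  define d where "d j = of_int (x (- int j)) * (\<beta> ^ (m + j) - of_int (T (m + j)))" for j
  define I where "I n = (\<Sum>j\<le>n. x (- int j) * T (m + j))" for n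
  define tail where "tail = (\<Sum>i. of_int (x (int (Suc i))) * \<beta> powi (int m - int (Suc i)))"
  have "norm (d j) \<le> (of_int B * C * \<rho> ^ m) * \<rho> ^ j" for j
  proof -
    have "norm (d j) \<le> of_int B * (C * \<rho> ^ (m + j))"
      unfolding d_def norm_mult using bounded[of "- int j"] T[of "m + j"]
      by (intro mult_mono) (auto simp flip: of_int_abs)
    then show ?thesis by (simp add: power_add)
  qed
  then have "summable d"
    using \<rho> by (intro summable_comparison_test[OF _ summable_mult[OF summable_geometric]]) auto
  have series_eq: "partial_series \<beta> x m n = ((\<Sum>j\<le>n. d j) + tail) + of_int (I n)" for n
  proof -
    have "(\<Sum>k\<in>{- int n..0}. of_int (x k) * \<beta> powi (int m - k))
        = (\<Sum>j\<le>n. of_int (x (- int j)) * \<beta> ^ (m + j))"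
      unfolding sum_atLeastAtMost_neg_int
      by (intro sum.cong refl) (simp flip: power_int_of_nat add: add.commute)
    also have "\<dots> = (\<Sum>j\<le>n. d j) + of_int (I n)"
      by (simp add: d_def I_def sum.distrib[symmetric] algebra_simps)
    finally show ?thesis unfolding partial_series_def tail_def by simp
  qed
  have "(\<lambda>n. cis (2 * pi * ((\<Sum>j\<le>n. d j) + tail))) \<longlonglongrightarrow> cis (2 * pi * (suminf d + tail))"
    using \<open>summable d\<close> by (intro tendsto_intros summable_LIMSEQ')
  then have "converges_mod1 (partial_series \<beta> x m) (suminf d + tail)"
    unfolding converges_mod1_def series_eq cis_2pi_add_of_int .
  then show ?thesis ..
qed

lemma Phi_coord_converges_mod1:
  assumes "pisot_of_degree \<beta> r" and "\<And>k. \<bar>x k\<bar> \<le> B"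
  shows "0 \<le> Phi_coord \<beta> x m" "Phi_coord \<beta> x m < 1"
    and "converges_mod1 (partial_series \<beta> x m) (Phi_coord \<beta> x m)"
proof -
  obtain L where "converges_mod1 (partial_series \<beta> x m) L"
    using partial_series_converges_mod1[OF assms] ..
  then show "0 \<le> Phi_coord \<beta> x m" "Phi_coord \<beta> x m < 1"
    and "converges_mod1 (partial_series \<beta> x m) (Phi_coord \<beta> x m)"
    unfolding Phi_coord_def by (rule the_converges_mod1)+
qed

lemma borel_measurable_cis [measurable]: "cis \<in> borel_measurable borel"
  by (intro borel_measurable_continuous_onI continuous_intros)

lemma borel_measurable_frac [measurable]: "(frac :: real \<Rightarrow> real) \<in> borel_measurable borel"
  unfolding frac_def by measurable

definition arg_turns :: "complex \<Rightarrow> real" where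
  "arg_turns w = frac (Arg w / (2 * pi))"

lemma borel_measurable_arg_turns [measurable]: "arg_turns \<in> borel_measurable borel"
proof -
  have [measurable]: "Measurable.pred borel (\<lambda>w::complex. w = 0)"
    using borel_closed[OF closed_singleton[of 0]] by (simp add: pred_def)
  show ?thesis unfolding arg_turns_def Arg_def by measurable
qed

lemma arg_turns_bounds: "0 \<le> arg_turns w" "arg_turns w < 1"
  by (simp_all add: arg_turns_def frac_lt_1)

lemma cis_arg_turns:
  assumes "cmod w = 1" shows "cis (2 * pi * arg_turns w) = w"
proof -
  have "w \<noteq> 0" using assms by auto
  with assms show ?thesis by (simp add: arg_turns_def cis_2pi_frac cis_Arg sgn_eq)
qed

text \<open>Off the convergence set, \<^const>\<open>Phi_coord\<close> is the unspecified constant \<open>THE t. False\<close>.\<close>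
lemma Phi_coord_eq_arg_turns:
  "Phi_coord \<beta> x m =
     (if Cauchy (\<lambda>n. cis (2 * pi * partial_series \<beta> x m n))
      then arg_turns (lim (\<lambda>n. cis (2 * pi * partial_series \<beta> x m n))) else (THE t. False))"
proof -
  define g where "g = (\<lambda>n. cis (2 * pi * partial_series \<beta> x m n))"
  have conv_iff: "converges_mod1 (partial_series \<beta> x m) t \<longleftrightarrow> g \<longlonglongrightarrow> cis (2 * pi * t)" for t
    unfolding converges_mod1_def g_def ..
  show ?thesis
  proof (cases "Cauchy g")
    case True
    then have g_lim: "g \<longlonglongrightarrow> lim g"
      by (metis Cauchy_convergent convergent_LIMSEQ_iff)
    then have "(\<lambda>n. norm (g n)) \<longlonglongrightarrow> norm (lim g)"
      by (rule tendsto_norm)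
    then have "cmod (lim g) = 1"
      by (simp add: g_def LIMSEQ_const_iff)
    then have conv: "converges_mod1 (partial_series \<beta> x m) (arg_turns (lim g))"
      using g_lim by (simp add: conv_iff cis_arg_turns)
    have "Phi_coord \<beta> x m = arg_turns (lim g)"
      using the_converges_mod1[OF conv] converges_mod1_unique[OF _ conv] arg_turns_bounds
      unfolding Phi_coord_def by blast
    with True show ?thesis by (simp add: g_def)
  next
    case False
    then have "\<not> converges_mod1 (partial_series \<beta> x m) t" for t
      unfolding conv_iff by (metis convergentI convergent_Cauchy)
    with False show ?thesis by (simp add: Phi_coord_def g_def)
  qed
qed

lemma borel_measurable_partial_series [measurable]:
  "(\<lambda>x. partial_series \<beta> x m n) \<in> borel_measurable seq_space"
  unfolding partial_series_def seq_space_def by measurable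

lemma borel_measurable_Phi_coord [measurable]:
  "(\<lambda>x. Phi_coord \<beta> x m) \<in> borel_measurable seq_space"
proof -
  have [measurable]: "(\<lambda>x. cis (2 * pi * partial_series \<beta> x m n)) \<in> borel_measurable seq_space" for n
    by measurable
  show ?thesis unfolding Phi_coord_eq_arg_turns by measurable
qed

lemma sum_matrix_vector_mult:
  fixes f :: "'a \<Rightarrow> 'b::semiring_1^'n::finite^'m::finite"
  shows "(\<Sum>a\<in>A. f a) *v v = (\<Sum>a\<in>A. f a *v v)"
  by (induction A rule: infinite_finite_induct) (auto simp: matrix_vector_mult_add_rdistrib)

lemma matrix_vector_mult_sum:
  fixes M :: "'b::semiring_1^'n::finite^'m::finite"
  shows "M *v (\<Sum>a\<in>A. f a) = (\<Sum>a\<in>A. M *v f a)"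
  by (induction A rule: infinite_finite_induct) (auto simp: matrix_vector_right_distrib)

definition words :: "'a set \<Rightarrow> nat \<Rightarrow> 'a list set" where
  "words A n = {w. set w \<subseteq> A \<and> length w = n}"

lemma finite_words: "finite A \<Longrightarrow> finite (words A n)"
  unfolding words_def by (rule finite_lists_length_eq)

lemma words_0: "words A 0 = {[]}"
  by (auto simp: words_def)

lemma words_Suc: "words A (Suc n) = (\<lambda>(a, w). a # w) ` (A \<times> words A n)"
  by (auto simp: words_def length_Suc_conv image_iff)

lemma sum_word_matrix_eigenvector:
  assumes eigen: "total_matrix Alph E lab *v v = lam *\<^sub>R v"
  shows "(\<Sum>w\<in>words Alph n. word_matrix E lab w *v v) = lam ^ n *\<^sub>R v"
proof (induction n)
  case 0
  show ?case by (simp add: words_0 word_matrix_def)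
next
  case (Suc n)
  have inj: "inj_on (\<lambda>(a, w). a # w) (Alph \<times> words Alph n)"
    by (auto simp: inj_on_def)
  have "(\<Sum>w\<in>words Alph (Suc n). word_matrix E lab w *v v)
      = (\<Sum>a\<in>Alph. \<Sum>w\<in>words Alph n. label_matrix E lab a *v (word_matrix E lab w *v v))"
    unfolding words_Suc sum.reindex[OF inj] sum.cartesian_product
    by (simp add: word_matrix_def matrix_vector_mul_assoc case_prod_unfold)
  also have "\<dots> = (\<Sum>a\<in>Alph. label_matrix E lab a *v (lam ^ n *\<^sub>R v))"
    by (simp add: matrix_vector_mult_sum[symmetric] Suc)
  also have "\<dots> = lam ^ n *\<^sub>R (total_matrix Alph E lab *v v)"
    by (simp add: total_matrix_def sum_matrix_vector_mult matrix_vector_mult_scaleR scaleR_sum_right)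
  also have "\<dots> = lam ^ Suc n *\<^sub>R v"
    by (simp add: eigen)
  finally show ?case .
qed

definition cylinder :: "int list \<Rightarrow> (nat \<Rightarrow> int) set" where
  "cylinder w = {x. \<forall>i<length w. x i = w ! i}"

lemma space_seq_space_plus [simp]: "space seq_space_plus = UNIV"
  by (simp add: seq_space_plus_def space_PiM)

lemma space_seq_space [simp]: "space seq_space = UNIV"
  by (simp add: seq_space_def space_PiM)

lemma cylinder_in_sets: "cylinder w \<in> sets seq_space_plus"
proof -
  have "{x \<in> space seq_space_plus. \<forall>i<length w. x i = w ! i} \<in> sets seq_space_plus"
    unfolding seq_space_plus_def by measurable
  then show ?thesis by (simp add: cylinder_def)
qed

lemma disjoint_family_on_cylinder:
  "(\<And>w. w \<in> W \<Longrightarrow> length w = n) \<Longrightarrow> disjoint_family_on cylinder W"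
  by (auto simp: disjoint_family_on_def cylinder_def intro: nth_equalityI)

lemma UN_cylinder_words: "{x. \<forall>i<n. x i \<in> A} = (\<Union>w\<in>words A n. cylinder w)"
proof (intro equalityI subsetI)
  fix x assume "x \<in> {x. \<forall>i<n. x i \<in> A}"
  then have "map x [0..<n] \<in> words A n" "x \<in> cylinder (map x [0..<n])"
    by (auto simp: words_def cylinder_def)
  then show "x \<in> (\<Union>w\<in>words A n. cylinder w)" by blast
qed (auto simp: words_def cylinder_def)

lemma is_mu_plus_measure_cylinder:
  assumes "is_mu_plus Alph E lab lam vL vR m" and "set w \<subseteq> Alph"
  shows "measure m (cylinder w) = (1 / lam) ^ length w * (vL \<bullet> (word_matrix E lab w *v vR))"
proof -
  have "space m = UNIV"
    using assms(1) sets_eq_imp_space_eq[of m seq_space_plus] by (simp add: is_mu_plus_def)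
  with assms show ?thesis by (simp add: is_mu_plus_def cylinder_def)
qed

lemma is_mu_plus_AE_alphabet:
  assumes "finite Alph" "lam > 0" and eigen: "total_matrix Alph E lab *v vR = lam *\<^sub>R vR"
    and "vL \<bullet> vR = 1" and mu_plus: "is_mu_plus Alph E lab lam vL vR m"
  shows "AE x in m. \<forall>i. x i \<in> Alph"
proof -
  interpret prob_space m using mu_plus by (simp add: is_mu_plus_def)
  have sets_m: "sets m = sets seq_space_plus" using mu_plus by (simp add: is_mu_plus_def)
  have "prob {x. \<forall>i<n. x i \<in> Alph} = 1" for n
  proof -
    have "prob {x. \<forall>i<n. x i \<in> Alph} = (\<Sum>w\<in>words Alph n. prob (cylinder w))"
      unfolding UN_cylinder_words using cylinder_in_sets sets_m
      by (intro finite_measure_finite_Union finite_words assms(1) disjoint_family_on_cylinder)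
        (auto simp: words_def)
    also have "\<dots> = (\<Sum>w\<in>words Alph n. (1 / lam) ^ n * (vL \<bullet> (word_matrix E lab w *v vR)))"
      using is_mu_plus_measure_cylinder[OF mu_plus] by (intro sum.cong) (auto simp: words_def)
    also have "\<dots> = (1 / lam) ^ n * (vL \<bullet> (\<Sum>w\<in>words Alph n. word_matrix E lab w *v vR))"
      by (simp add: sum_distrib_left inner_sum_right)
    also have "\<dots> = 1"
      using assms by (simp add: sum_word_matrix_eigenvector[OF eigen] power_one_over)
    finally show ?thesis .
  qed
  then have "AE x in m. x \<in> {x. \<forall>i<n. x i \<in> Alph}" for n
    by (intro AE_prob_1) simp
  then have "AE x in m. \<forall>n. x \<in> {x. \<forall>i<n. x i \<in> Alph}"
    by (subst AE_all_countable) simp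
  then show ?thesis by eventually_elim auto
qed

lemma sets_seq_space_plus:
  "sets seq_space_plus = sigma_sets UNIV (prod_algebra UNIV (\<lambda>_::nat. count_space (UNIV::int set)))"
  unfolding seq_space_plus_def sets_PiM by (simp add: PiE_UNIV_domain)

lemma prod_algebra_eq_UN_cylinder:
  assumes "X \<in> prod_algebra UNIV (\<lambda>_::nat. count_space (UNIV::int set))"
  obtains n W where "X = (\<Union>w\<in>W. cylinder w)" and "\<And>w. w \<in> W \<Longrightarrow> length w = n"
proof -
  obtain J F where X: "X = prod_emb UNIV (\<lambda>_. count_space UNIV) J (Pi\<^sub>E J F)" and "finite J"
    using assms by (auto elim!: prod_algebraE)
  define n where "n = Suc (Max J)"
  have J_less: "j \<in> J \<Longrightarrow> j < n" for j
    using \<open>finite J\<close> by (simp add: n_def le_imp_less_Suc)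
  define W where "W = {w. length w = n \<and> (\<forall>j\<in>J. w ! j \<in> F j)}"
  have "X = (\<Union>w\<in>W. cylinder w)"
  proof (intro equalityI subsetI)
    fix x assume "x \<in> X"
    then have "map x [0..<n] \<in> W" "x \<in> cylinder (map x [0..<n])"
      using J_less by (auto simp: X prod_emb_iff W_def cylinder_def)
    then show "x \<in> (\<Union>w\<in>W. cylinder w)" by blast
  next
    fix x assume "x \<in> (\<Union>w\<in>W. cylinder w)"
    then show "x \<in> X"
      using J_less by (auto simp: X prod_emb_iff extensional_def W_def cylinder_def)
  qed
  then show thesis by (rule that) (simp add: W_def)
qed

lemma measure_eqI_cylinder:
  fixes M N :: "(nat \<Rightarrow> int) measure"
  assumes "prob_space M"
    and sets_M: "sets M = sets seq_space_plus" and sets_N: "sets N = sets seq_space_plus"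
    and cylinder_eq: "\<And>w. emeasure M (cylinder w) = emeasure N (cylinder w)"
  shows "M = N"
proof (rule measure_eqI_generator_eq[where \<Omega>=UNIV and A="\<lambda>_. UNIV"
      and E="prod_algebra UNIV (\<lambda>_::nat. count_space (UNIV::int set))"])
  show "sets M = sigma_sets UNIV (prod_algebra UNIV (\<lambda>_. count_space UNIV))"
    "sets N = sigma_sets UNIV (prod_algebra UNIV (\<lambda>_. count_space UNIV))"
    using sets_M sets_N by (simp_all add: sets_seq_space_plus)
  show "range (\<lambda>_. UNIV) \<subseteq> prod_algebra UNIV (\<lambda>_::nat. count_space (UNIV::int set))"
    using space_in_prod_algebra[of UNIV "\<lambda>_::nat. count_space (UNIV::int set)"]
    by (simp add: PiE_UNIV_domain)
  show "emeasure M UNIV \<noteq> \<infinity>"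
    using prob_space.emeasure_space_1[OF assms(1)] sets_eq_imp_space_eq[OF sets_M] by simp
next
  fix X assume "X \<in> prod_algebra UNIV (\<lambda>_::nat. count_space (UNIV::int set))"
  then obtain n W where X: "X = (\<Union>w\<in>W. cylinder w)" and len: "\<And>w. w \<in> W \<Longrightarrow> length w = n"
    by (metis prod_algebra_eq_UN_cylinder)
  have "countable W" by (rule countable_subset[of _ UNIV]) simp_all
  have "emeasure M X = (\<integral>\<^sup>+w. emeasure M (cylinder w) \<partial>count_space W)"
    unfolding X using cylinder_in_sets sets_M
    by (intro emeasure_UN_countable \<open>countable W\<close> disjoint_family_on_cylinder[OF len]) auto
  also have "\<dots> = emeasure N X"
    unfolding X cylinder_eq using cylinder_in_sets sets_N
    by (intro emeasure_UN_countable[symmetric] \<open>countable W\<close> disjoint_family_on_cylinder[OF len]) auto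
  finally show "emeasure M X = emeasure N X" .
qed (auto intro: Int_stable_prod_algebra)

lemma emeasure_cylinder_AE_outside:
  assumes "sets M = sets seq_space_plus" and "AE x in M. \<forall>i. x i \<in> A" and "\<not> set w \<subseteq> A"
  shows "emeasure M (cylinder w) = 0"
proof -
  obtain i where i: "i < length w" "w ! i \<notin> A"
    using assms(3) by (metis in_set_conv_nth subsetI)
  have "AE x in M. x \<notin> cylinder w"
    using assms(2)
  proof eventually_elim
    case (elim x)
    then have "x i \<in> A" ..
    with i(2) have "x i \<noteq> w ! i" by auto
    with i(1) show ?case by (auto simp: cylinder_def)
  qed
  then show ?thesis
    using cylinder_in_sets assms(1)
    by (subst AE_iff_measurable[symmetric]) (auto simp: sets_eq_imp_space_eq[OF assms(1)])
qed

lemma is_mu_plus_unique: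
  assumes "finite Alph" "lam > 0" "total_matrix Alph E lab *v vR = lam *\<^sub>R vR" "vL \<bullet> vR = 1"
    and mu_M: "is_mu_plus Alph E lab lam vL vR M" and mu_N: "is_mu_plus Alph E lab lam vL vR N"
  shows "M = N"
proof (rule measure_eqI_cylinder)
  interpret M: prob_space M using mu_M by (simp add: is_mu_plus_def)
  interpret N: prob_space N using mu_N by (simp add: is_mu_plus_def)
  have sets: "sets M = sets seq_space_plus" "sets N = sets seq_space_plus"
    using mu_M mu_N by (simp_all add: is_mu_plus_def)
  show "prob_space M" by unfold_locales
  show "sets M = sets seq_space_plus" "sets N = sets seq_space_plus" by (fact sets)+
  fix w
  show "emeasure M (cylinder w) = emeasure N (cylinder w)"
  proof (cases "set w \<subseteq> Alph")
    case True
    then show ?thesis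
      using is_mu_plus_measure_cylinder[OF mu_M] is_mu_plus_measure_cylinder[OF mu_N]
      by (simp add: M.emeasure_eq_measure N.emeasure_eq_measure)
  next
    case False
    then show ?thesis
      using emeasure_cylinder_AE_outside sets is_mu_plus_AE_alphabet[OF assms(1-4)] mu_M mu_N
      by metis
  qed
qed

definition seq_shift :: "int \<Rightarrow> (int \<Rightarrow> int) \<Rightarrow> nat \<Rightarrow> int" where
  "seq_shift a y = (\<lambda>i. y (int i + a))"

lemma measurable_seq_shift:
  assumes "sets M = sets seq_space"
  shows "seq_shift a \<in> measurable M seq_space_plus"
proof -
  have "seq_shift a \<in> measurable seq_space seq_space_plus"
    unfolding seq_shift_def seq_space_plus_def seq_space_def
    by (intro measurable_PiM_single') (simp_all add: space_PiM)
  then show ?thesis by (subst measurable_cong_sets[OF assms refl])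
qed

lemma is_mu_plus_distr_seq_shift:
  assumes mu: "is_mu Alph E lab lam vL vR \<mu>"
  shows "is_mu_plus Alph E lab lam vL vR (distr \<mu> seq_space_plus (seq_shift a))"
proof -
  have sets_mu: "sets \<mu> = sets seq_space" and "space \<mu> = UNIV"
    using mu sets_eq_imp_space_eq[of \<mu> seq_space] by (simp_all add: is_mu_def)
  note shift = measurable_seq_shift[OF sets_mu]
  have "measure (distr \<mu> seq_space_plus (seq_shift a)) {x. \<forall>i<length ws. x i = ws ! i}
      = (1 / lam) ^ length ws * (vL \<bullet> (word_matrix E lab ws *v vR))" if "set ws \<subseteq> Alph" for ws
  proof -
    have "measure (distr \<mu> seq_space_plus (seq_shift a)) {x. \<forall>i<length ws. x i = ws ! i}
        = measure \<mu> {y \<in> space \<mu>. \<forall>i<length ws. y ((a - 1) + 1 + int i) = ws ! i}"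
      using measure_distr[OF shift cylinder_in_sets[of ws]] \<open>space \<mu> = UNIV\<close>
      by (simp add: cylinder_def seq_shift_def vimage_def add.commute)
    also have "\<dots> = (1 / lam) ^ length ws * (vL \<bullet> (word_matrix E lab ws *v vR))"
      using mu that unfolding is_mu_def by blast
    finally show ?thesis .
  qed
  then show ?thesis
    using mu prob_space.prob_space_distr[OF _ shift] by (simp add: is_mu_plus_def is_mu_def)
qed

lemma is_mu_AE_alphabet:
  assumes "finite Alph" "lam > 0" "total_matrix Alph E lab *v vR = lam *\<^sub>R vR" "vL \<bullet> vR = 1"
    and mu: "is_mu Alph E lab lam vL vR \<mu>"
  shows "AE y in \<mu>. \<forall>k. y k \<in> Alph"
proof -
  have sets_mu: "sets \<mu> = sets seq_space"
    using mu by (simp add: is_mu_def)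
  have "{x \<in> space seq_space_plus. \<forall>i. x i \<in> Alph} \<in> sets seq_space_plus"
    unfolding seq_space_plus_def by measurable
  then have "AE y in \<mu>. \<forall>i. seq_shift k y i \<in> Alph" for k
    using is_mu_plus_AE_alphabet[OF assms(1-4) is_mu_plus_distr_seq_shift[OF mu, of k]]
    by (subst (asm) AE_distr_iff[OF measurable_seq_shift[OF sets_mu]]) auto
  then have "AE y in \<mu>. \<forall>k i. seq_shift k y i \<in> Alph"
    by (subst AE_all_countable) simp
  then have "AE y in \<mu>. \<forall>k. seq_shift k y 0 \<in> Alph"
    by eventually_elim blast
  then show ?thesis by (simp add: seq_shift_def)
qed

lemma summable_digit_series:
  fixes \<beta> :: real
  assumes "\<beta> > 1" and bounded: "\<And>i. \<bar>x i\<bar> \<le> B"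
  shows "summable (\<lambda>i. of_int (x i) * \<beta> powi (- int (Suc i)))"
proof (rule summable_comparison_test[OF _ summable_mult[OF summable_geometric[of "1 / \<beta>"]]])
  show "norm (1 / \<beta>) < 1" using assms(1) by simp
  have "norm (of_int (x i) * \<beta> powi (- int (Suc i))) \<le> of_int B * (1 / \<beta>) ^ i" for i
  proof -
    have "\<beta> powi (- int (Suc i)) = (1 / \<beta>) ^ Suc i"
      unfolding power_int_minus power_int_of_nat by (simp add: power_one_over inverse_eq_divide)
    then have "norm (of_int (x i) * \<beta> powi (- int (Suc i))) = \<bar>of_int (x i)\<bar> * (1 / \<beta>) ^ Suc i"
      using assms(1) by (simp add: abs_mult)
    also have "\<dots> \<le> of_int B * (1 / \<beta>) ^ i"
      using assms(1) bounded[of i]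
      by (intro mult_mono) (auto simp: power_le_one field_simps simp flip: of_int_abs)
    finally show ?thesis .
  qed
  then show "\<exists>N. \<forall>i\<ge>N. norm (of_int (x i) * \<beta> powi (- int (Suc i))) \<le> of_int B * (1 / \<beta>) ^ i"
    by blast
qed

lemma phi_plus_seq_shift:
  assumes "\<beta> > 1" and bounded: "\<And>k. \<bar>x k\<bar> \<le> B"
  shows "phi_plus \<beta> (seq_shift (- int n) x) * \<beta> ^ (m + Suc n) = partial_series \<beta> x m n"
proof -
  define g where "g i = of_int (seq_shift (- int n) x i) * \<beta> powi (- int (Suc i))" for i
  define f where "f i = of_int (x (int i - int n)) * \<beta> powi (int m + int n - int i)" for i
  have f_eq: "f i = g i * \<beta> ^ (m + Suc n)" for i
  proof -
    have "\<beta> powi (- int (Suc i)) * \<beta> ^ (m + Suc n) = \<beta> powi (- int (Suc i)) * \<beta> powi int (m + Suc n)"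
      by (simp only: power_int_of_nat)
    also have "\<dots> = \<beta> powi (- int (Suc i) + int (m + Suc n))"
      using assms(1) by (subst power_int_add) auto
    also have "- int (Suc i) + int (m + Suc n) = int m + int n - int i"
      by simp
    finally show ?thesis
      by (simp add: f_def g_def seq_shift_def mult.assoc)
  qed
  have "summable g"
    unfolding g_def using assms by (intro summable_digit_series) (auto simp: seq_shift_def)
  then have "summable f"
    unfolding f_eq by (rule summable_mult2)
  have "phi_plus \<beta> (seq_shift (- int n) x) * \<beta> ^ (m + Suc n) = suminf f"
    using \<open>summable g\<close> unfolding f_eq phi_plus_def g_def by (simp add: suminf_mult2)
  also have "suminf f = (\<Sum>i. f (i + Suc n)) + (\<Sum>i<Suc n. f i)"
    by (rule suminf_split_initial_segment[OF \<open>summable f\<close>])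
  also have "(\<Sum>i. f (i + Suc n)) = (\<Sum>i. of_int (x (int (Suc i))) * \<beta> powi (int m - int (Suc i)))"
    by (simp add: f_def algebra_simps)
  also have "(\<Sum>i<Suc n. f i) = (\<Sum>j\<le>n. f (n - j))"
    by (subst sum.nat_diff_reindex[symmetric]) (simp add: lessThan_Suc_atMost)
  also have "\<dots> = (\<Sum>k\<in>{- int n..0}. of_int (x k) * \<beta> powi (int m - k))"
    unfolding sum_atLeastAtMost_neg_int by (intro sum.cong) (auto simp: f_def)
  finally show ?thesis
    unfolding partial_series_def by simp
qed

lemma borel_measurable_phi_plus [measurable]: "phi_plus \<beta> \<in> borel_measurable seq_space_plus"
  unfolding phi_plus_def seq_space_plus_def by measurable

lemma fourier_transform_phi_plus_eq_integral_partial_series: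
  assumes sets_\<mu>: "sets \<mu> = sets seq_space"
    and shift: "distr \<mu> seq_space_plus (seq_shift (- int n)) = \<mu>p"
    and "\<beta> > 1" and bounded: "AE y in \<mu>. \<forall>k. \<bar>y k\<bar> \<le> B"
  shows "fourier_transform (distr \<mu>p lborel (phi_plus \<beta>)) ((\<Sum>j<r. of_int (m j) * \<beta> ^ j) * \<beta> ^ Suc n)
       = (\<integral>y. cis (- 2 * pi * (\<Sum>j<r. of_int (m j) * partial_series \<beta> y j n)) \<partial>\<mu>)"
    (is "fourier_transform _ ?t = _")
proof -
  have [measurable]: "seq_shift (- int n) \<in> measurable \<mu> seq_space_plus"
    by (rule measurable_seq_shift[OF sets_\<mu>])
  have [measurable]: "(\<lambda>y. partial_series \<beta> y j n) \<in> borel_measurable \<mu>" for j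
    by (subst measurable_cong_sets[OF sets_\<mu> refl]) measurable
  have [measurable]: "phi_plus \<beta> \<in> borel_measurable \<mu>p"
    unfolding shift[symmetric] by measurable
  have "fourier_transform (distr \<mu>p lborel (phi_plus \<beta>)) ?t
      = (\<integral>x. cis (- 2 * pi * phi_plus \<beta> x * ?t) \<partial>\<mu>p)"
    unfolding fourier_transform_def by (rule integral_distr) measurable
  also have "\<dots> = (\<integral>y. cis (- 2 * pi * phi_plus \<beta> (seq_shift (- int n) y) * ?t) \<partial>\<mu>)"
    unfolding shift[symmetric] by (rule integral_distr) measurable
  also have "\<dots> = (\<integral>y. cis (- 2 * pi * (\<Sum>j<r. of_int (m j) * partial_series \<beta> y j n)) \<partial>\<mu>)"
  proof (rule integral_cong_AE)
    show "AE y in \<mu>. cis (- 2 * pi * phi_plus \<beta> (seq_shift (- int n) y) * ?t)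
        = cis (- 2 * pi * (\<Sum>j<r. of_int (m j) * partial_series \<beta> y j n))"
      using bounded
    proof eventually_elim
      case (elim y)
      have "phi_plus \<beta> (seq_shift (- int n) y) * ?t
          = (\<Sum>j<r. of_int (m j) * (phi_plus \<beta> (seq_shift (- int n) y) * \<beta> ^ (j + Suc n)))"
        by (simp add: sum_distrib_left sum_distrib_right power_add mult_ac)
      also have "\<dots> = (\<Sum>j<r. of_int (m j) * partial_series \<beta> y j n)"
        by (simp only: phi_plus_seq_shift[OF \<open>\<beta> > 1\<close> elim[rule_format]])
      finally show ?case by (simp add: mult.assoc)
    qed
  qed measurable
  finally show ?thesis .
qed

lemma AE_Phi_coord_converges_mod1:
  assumes "pisot_of_degree \<beta> r" and "AE y in \<mu>. \<forall>k. \<bar>y k\<bar> \<le> B"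
  shows "AE y in \<mu>. \<forall>l. 0 \<le> Phi_coord \<beta> y l \<and> Phi_coord \<beta> y l < 1
      \<and> converges_mod1 (partial_series \<beta> y l) (Phi_coord \<beta> y l)"
  using assms(2)
proof eventually_elim
  case (elim y)
  then have "\<And>k. \<bar>y k\<bar> \<le> B" by blast
  from Phi_coord_converges_mod1[OF assms(1) this] show ?case by simp
qed

lemma cis_2pi_sum_of_int_mult:
  "cis (2 * pi * (\<Sum>l\<in>L. of_int (k l) * a l)) = (\<Prod>l\<in>L. cis (2 * pi * a l) powi k l)"
  by (induction L rule: infinite_finite_induct)
    (simp_all add: distrib_left cis_mult[symmetric] cis_power_int mult_ac)

lemma converges_mod1_sum_of_int_mult:
  assumes "\<And>l. l \<in> L \<Longrightarrow> converges_mod1 (a l) (A l)"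
  shows "converges_mod1 (\<lambda>n. \<Sum>l\<in>L. of_int (k l) * a l n) (\<Sum>l\<in>L. of_int (k l) * A l)"
  using assms unfolding converges_mod1_def cis_2pi_sum_of_int_mult
  by (intro tendsto_prod tendsto_power_int) auto

lemma distr_cong_AE_space:
  assumes g: "g \<in> measurable M N" and S: "{x \<in> space M. f x \<in> space N} \<in> sets M"
    and AE: "AE x in M. f x \<in> space N"
    and eq: "\<And>x. x \<in> space M \<Longrightarrow> f x \<in> space N \<Longrightarrow> f x = g x"
  shows "distr M N f = distr M N g"
  unfolding distr_def
proof (rule measure_of_eq)
  show "sets N \<subseteq> Pow (space N)" by (rule sets.space_closed)
  fix A assume "A \<in> sigma_sets (space N) (sets N)"
  then have A: "A \<in> sets N" by (simp add: sets.sigma_sets_eq)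
  then have "f -` A \<inter> space M = (g -` A \<inter> space M) \<inter> {x \<in> space M. f x \<in> space N}"
    using eq sets.sets_into_space[OF A] by auto
  also have "emeasure M \<dots> = emeasure M (g -` A \<inter> space M)"
    using AE S measurable_sets[OF g A] by (intro emeasure_eq_AE) auto
  finally show "emeasure M (f -` A \<inter> space M) = emeasure M (g -` A \<inter> space M)" .
qed

lemma Phi_in_space_torus_iff:
  "Phi \<beta> r y \<in> space (torus r) \<longleftrightarrow> (\<forall>j<r. 0 \<le> Phi_coord \<beta> y j \<and> Phi_coord \<beta> y j < 1)"
  by (auto simp: torus_def space_PiM space_restrict_space Phi_def PiE_iff)

text \<open>\<^const>\<open>Phi\<close> maps into the torus only almost everywhere; taking fractional parts of its
  coordinates gives a map \<open>g\<close> into the torus with the same image measure and the same integrand.\<close>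
lemma torus_fourier_coeff_distr_Phi:
  assumes sets_\<mu>: "sets \<mu> = sets seq_space"
    and AE: "AE y in \<mu>. \<forall>j<r. 0 \<le> Phi_coord \<beta> y j \<and> Phi_coord \<beta> y j < 1"
  shows "torus_fourier_coeff r (distr \<mu> (torus r) (Phi \<beta> r)) m
       = (\<integral>y. cis (- 2 * pi * (\<Sum>j<r. of_int (m j) * Phi_coord \<beta> y j)) \<partial>\<mu>)"
proof -
  have [measurable]: "(\<lambda>y. Phi_coord \<beta> y j) \<in> borel_measurable \<mu>" for j
    by (subst measurable_cong_sets[OF sets_\<mu> refl]) measurable
  define g where "g y = (\<lambda>j\<in>{..<r}. frac (Phi_coord \<beta> y j))" for y
  have g: "g \<in> measurable \<mu> (torus r)"
    unfolding torus_def g_def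
  proof (rule measurable_PiM_single')
    show "(\<lambda>y. (\<lambda>j\<in>{..<r}. frac (Phi_coord \<beta> y j)) j) \<in> measurable \<mu> (restrict_space lborel {0..<1})"
      if "j \<in> {..<r}" for j
      using that by (intro measurable_restrict_space2) (auto simp: frac_lt_1)
  qed (auto simp: space_restrict_space frac_lt_1 PiE_iff split: if_split_asm)
  have "{y \<in> space \<mu>. Phi \<beta> r y \<in> space (torus r)} \<in> sets \<mu>"
    unfolding Phi_in_space_torus_iff by measurable
  moreover have "AE y in \<mu>. Phi \<beta> r y \<in> space (torus r)"
    using AE by (simp add: Phi_in_space_torus_iff)
  moreover have "Phi \<beta> r y = g y" if "Phi \<beta> r y \<in> space (torus r)" for y
    using that unfolding Phi_in_space_torus_iff by (auto simp: g_def Phi_def frac_eq)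
  ultimately have distr_eq: "distr \<mu> (torus r) (Phi \<beta> r) = distr \<mu> (torus r) g"
    by (intro distr_cong_AE_space[OF g])
  have [measurable]: "(\<lambda>t. t j) \<in> borel_measurable (torus r)" if "j < r" for j
  proof (rule measurable_compose)
    show "(\<lambda>t. t j) \<in> measurable (torus r) (restrict_space lborel {0..<1})"
      unfolding torus_def using that by (intro measurable_component_singleton) simp
    show "(\<lambda>x. x) \<in> measurable (restrict_space lborel {0..<(1::real)}) borel"
      by (intro measurable_restrict_space1) simp
  qed
  have cis_eq: "cis (- 2 * pi * (\<Sum>j<r. of_int (m j) * g y j))
      = cis (- 2 * pi * (\<Sum>j<r. of_int (m j) * Phi_coord \<beta> y j))" for y
  proof -
    define K where "K = (\<Sum>j<r. m j * \<lfloor>Phi_coord \<beta> y j\<rfloor>)"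
    have sum_eq: "(\<Sum>j<r. of_int (m j) * g y j) = (\<Sum>j<r. of_int (m j) * Phi_coord \<beta> y j) - of_int K"
      by (simp add: K_def g_def frac_def algebra_simps sum_subtractf)
    have "cis (- 2 * pi * (\<Sum>j<r. of_int (m j) * g y j))
        = cis (2 * pi * (- (\<Sum>j<r. of_int (m j) * Phi_coord \<beta> y j) + of_int K))"
      unfolding sum_eq by (simp add: algebra_simps)
    also have "\<dots> = cis (2 * pi * (- (\<Sum>j<r. of_int (m j) * Phi_coord \<beta> y j)))"
      by (rule cis_2pi_add_of_int)
    finally show ?thesis by simp
  qed
  show ?thesis
    unfolding torus_fourier_coeff_def distr_eq cis_eq[symmetric] by (rule integral_distr[OF g]) measurable
qed

lemma integral_cis_partial_series_tendsto:
  assumes "prob_space \<mu>" and sets_\<mu>: "sets \<mu> = sets seq_space"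
    and conv: "AE y in \<mu>. \<forall>l. converges_mod1 (partial_series \<beta> y l) (Phi_coord \<beta> y l)"
  shows "(\<lambda>n. \<integral>y. cis (- 2 * pi * (\<Sum>l<r. of_int (m l) * partial_series \<beta> y l n)) \<partial>\<mu>)
      \<longlonglongrightarrow> (\<integral>y. cis (- 2 * pi * (\<Sum>l<r. of_int (m l) * Phi_coord \<beta> y l)) \<partial>\<mu>)"
proof (rule integral_dominated_convergence[where w="\<lambda>_. 1"])
  interpret prob_space \<mu> by fact
  have [measurable]: "(\<lambda>y. partial_series \<beta> y l n) \<in> borel_measurable \<mu>"
    "(\<lambda>y. Phi_coord \<beta> y l) \<in> borel_measurable \<mu>" for l n
    by (subst measurable_cong_sets[OF sets_\<mu> refl], measurable)+
  show "(\<lambda>y. cis (- 2 * pi * (\<Sum>l<r. of_int (m l) * Phi_coord \<beta> y l))) \<in> borel_measurable \<mu>"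
    "(\<lambda>y. cis (- 2 * pi * (\<Sum>l<r. of_int (m l) * partial_series \<beta> y l n))) \<in> borel_measurable \<mu>"
    "integrable \<mu> (\<lambda>_. 1)" for n
    by simp_all
  show "AE y in \<mu>. (\<lambda>n. cis (- 2 * pi * (\<Sum>l<r. of_int (m l) * partial_series \<beta> y l n)))
      \<longlonglongrightarrow> cis (- 2 * pi * (\<Sum>l<r. of_int (m l) * Phi_coord \<beta> y l))"
    using conv
  proof eventually_elim
    case (elim y)
    then have "converges_mod1 (\<lambda>n. \<Sum>l<r. of_int (- m l) * partial_series \<beta> y l n)
        (\<Sum>l<r. of_int (- m l) * Phi_coord \<beta> y l)"
      by (intro converges_mod1_sum_of_int_mult) blast
    then show ?case by (simp add: converges_mod1_def sum_negf)
  qed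
  show "AE y in \<mu>. norm (cis (- 2 * pi * (\<Sum>l<r. of_int (m l) * partial_series \<beta> y l n))) \<le> 1" for n
    by simp
qed

theorem theorem12:
  fixes Alph :: "int set"
    and E :: "('v::finite \<times> 'v) set"
    and lab :: "'v \<times> 'v \<Rightarrow> int"
    and lam :: real and vL vR :: "real^'v"
    and \<beta> :: real and r :: nat
    and \<mu>p :: "(nat \<Rightarrow> int) measure" and \<mu> :: "(int \<Rightarrow> int) measure"
    and m :: "nat \<Rightarrow> int"
  assumes "finite Alph"
    and "\<forall>e\<in>E. lab e \<in> Alph"
    and "primitive_matrix (total_matrix Alph E lab)"
    and "lam > 0"
    and "\<forall>i. vL $ i > 0" and "\<forall>i. vR $ i > 0"
    and "vL v* total_matrix Alph E lab = lam *\<^sub>R vL"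
    and "total_matrix Alph E lab *v vR = lam *\<^sub>R vR"
    and "vL \<bullet> vR = 1"
    and "pisot_of_degree \<beta> r"
    and "is_mu_plus Alph E lab lam vL vR \<mu>p"
    and "is_mu Alph E lab lam vL vR \<mu>"
  shows "(\<lambda>k. fourier_transform (distr \<mu>p lborel (phi_plus \<beta>))
                 ((\<Sum>j<r. of_int (m j) * \<beta> ^ j) * \<beta> ^ k))
           \<longlonglongrightarrow> torus_fourier_coeff r (distr \<mu> (torus r) (Phi \<beta> r)) m"
proof -
  note pisot = assms(10) and mu_plus = assms(11) and mu = assms(12)
  have "prob_space \<mu>" and sets_\<mu>: "sets \<mu> = sets seq_space"
    using mu by (simp_all add: is_mu_def)
  have "\<beta> > 1" using pisot by (simp add: pisot_of_degree_def)
  have bounded: "AE y in \<mu>. \<forall>k. \<bar>y k\<bar> \<le> Max (abs ` Alph)"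
    using is_mu_AE_alphabet[OF assms(1,4,8,9) mu] by eventually_elim (simp add: assms(1))
  note conv = AE_Phi_coord_converges_mod1[OF pisot bounded]
  have "distr \<mu> seq_space_plus (seq_shift (- int n)) = \<mu>p" for n
    by (rule is_mu_plus_unique[OF assms(1,4,8,9) is_mu_plus_distr_seq_shift[OF mu] mu_plus])
  note fourier_eq = fourier_transform_phi_plus_eq_integral_partial_series[OF sets_\<mu> this \<open>\<beta> > 1\<close> bounded]
  have "(\<lambda>n. fourier_transform (distr \<mu>p lborel (phi_plus \<beta>))
      ((\<Sum>j<r. of_int (m j) * \<beta> ^ j) * \<beta> ^ Suc n))
      \<longlonglongrightarrow> (\<integral>y. cis (- 2 * pi * (\<Sum>l<r. of_int (m l) * Phi_coord \<beta> y l)) \<partial>\<mu>)"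
    unfolding fourier_eq using conv
    by (intro integral_cis_partial_series_tendsto[OF \<open>prob_space \<mu>\<close> sets_\<mu>]) (simp add: eventually_mono)
  also have "(\<integral>y. cis (- 2 * pi * (\<Sum>l<r. of_int (m l) * Phi_coord \<beta> y l)) \<partial>\<mu>)
      = torus_fourier_coeff r (distr \<mu> (torus r) (Phi \<beta> r)) m"
    using conv by (intro torus_fourier_coeff_distr_Phi[symmetric] sets_\<mu>) (simp add: eventually_mono)
  finally show ?thesis by (rule LIMSEQ_imp_Suc)
qed

end
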